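(* Let $A$ and $B$ be two $m\times m$ coloring matrices. If $A$ and $B$ are tree coloring equivalent, then $A$ and $B$ have the same number of entries equal to $1$. If $A$ and $B$ are strictly tree coloring equivalent, then for every $1\le i\le m$, row $i$ of $A$ and row $i$ of $B$ contain the same number of ones.
   Context: A plane tree is an unlabeled rooted tree in which the children of every vertex are linearly ordered (left to right). A coloring matrix is an $m\times m$ matrix $A=(a_{ij})$ with entries in $\{0,1\}$. Given $A$, an $A$-coloring of a plane tree assigns to each vertex a color in $\{1,\dots,m\}$ such that whenever a vertex of color $j$ is a child of a vertex of color $i$, we have $a_{ij}=1$. Let $t_A(n)$ be the number of pairs (plane tree with $n$ vertices, $A$-coloring of it), and $t_A^{(i)}(n)$ the number of those in which the root has color $i$. Two $m\times m$ coloring matrices $A,B$ are tree coloring equivalent if $t_A(n)=t_B(n)$ for all $n\ge1$, and strictly tree coloring equivalent if $t_A^{(i)}(n)=t_B^{(i)}(n)$ for all $n\ge1$ and all $1\le i\le m$. *)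

theory Defs
  imports Main
begin

text \<open>A vertex-coloured plane tree: a root with a colour and an ordered list of
  subtrees. Forgetting the colours gives the underlying plane tree; such an object is
  exactly a pair (plane tree, colouring of its vertices).\<close>
datatype ctree = CNode nat "ctree list"

fun root_color :: "ctree \<Rightarrow> nat" where
  "root_color (CNode c ts) = c"

fun nverts :: "ctree \<Rightarrow> nat" where
  "nverts (CNode c ts) = Suc (sum_list (map nverts ts))"

definition coloring_matrix :: "nat \<Rightarrow> (nat \<Rightarrow> nat \<Rightarrow> nat) \<Rightarrow> bool" where
  "coloring_matrix m A \<longleftrightarrow> (\<forall>i\<in>{1..m}. \<forall>j\<in>{1..m}. A i j \<in> {0, 1})"

fun valid_col :: "nat \<Rightarrow> (nat \<Rightarrow> nat \<Rightarrow> nat) \<Rightarrow> ctree \<Rightarrow> bool" where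
  "valid_col m A (CNode c ts) \<longleftrightarrow> c \<in> {1..m} \<and>
     (\<forall>t\<in>set ts. A c (root_color t) = 1 \<and> valid_col m A t)"

definition tA :: "nat \<Rightarrow> (nat \<Rightarrow> nat \<Rightarrow> nat) \<Rightarrow> nat \<Rightarrow> nat" where
  "tA m A n = card {t. valid_col m A t \<and> nverts t = n}"

definition tAi :: "nat \<Rightarrow> (nat \<Rightarrow> nat \<Rightarrow> nat) \<Rightarrow> nat \<Rightarrow> nat \<Rightarrow> nat" where
  "tAi m A i n = card {t. valid_col m A t \<and> nverts t = n \<and> root_color t = i}"

definition tree_coloring_equiv :: "nat \<Rightarrow> (nat \<Rightarrow> nat \<Rightarrow> nat) \<Rightarrow> (nat \<Rightarrow> nat \<Rightarrow> nat) \<Rightarrow> bool" where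
  "tree_coloring_equiv m A B \<longleftrightarrow> (\<forall>n\<ge>1. tA m A n = tA m B n)"

definition strict_tree_coloring_equiv :: "nat \<Rightarrow> (nat \<Rightarrow> nat \<Rightarrow> nat) \<Rightarrow> (nat \<Rightarrow> nat \<Rightarrow> nat) \<Rightarrow> bool" where
  "strict_tree_coloring_equiv m A B \<longleftrightarrow>
     (\<forall>n\<ge>1. \<forall>i\<in>{1..m}. tAi m A i n = tAi m B i n)"

definition num_ones :: "nat \<Rightarrow> (nat \<Rightarrow> nat \<Rightarrow> nat) \<Rightarrow> nat" where
  "num_ones m A = card {(i, j). i \<in> {1..m} \<and> j \<in> {1..m} \<and> A i j = 1}"

definition row_ones :: "nat \<Rightarrow> (nat \<Rightarrow> nat \<Rightarrow> nat) \<Rightarrow> nat \<Rightarrow> nat" where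
  "row_ones m A i = card {j. j \<in> {1..m} \<and> A i j = 1}"

end

theory Submission
  imports Defs
begin

text \<open>A coloured plane tree with two vertices is a root of colour \<open>i\<close> with a single child
  of colour \<open>j\<close>, and it is an \<open>A\<close>-colouring exactly when \<open>A i j = 1\<close>. Hence \<open>tA m A 2\<close> is
  the number of ones of \<open>A\<close> and \<open>tAi m A i 2\<close> the number of ones in row \<open>i\<close>, so comparing
  the counts at \<open>n = 2\<close> gives both claims.\<close>

lemma nverts_pos: "0 < nverts t"
  by (cases t) auto

lemma sum_list_nverts_eq_0_iff: "sum_list (map nverts ts) = 0 \<longleftrightarrow> ts = []"
  using nverts_pos by (cases ts) auto

lemma nverts_eq_1_iff: "nverts t = 1 \<longleftrightarrow> (\<exists>c. t = CNode c [])"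
proof (cases t)
  case (CNode c ts)
  then show ?thesis
    using sum_list_nverts_eq_0_iff[of ts] by simp
qed

lemma sum_list_nverts_eq_1_iff: "sum_list (map nverts ts) = 1 \<longleftrightarrow> (\<exists>d. ts = [CNode d []])"
proof (cases ts)
  case (Cons t ts')
  have "nverts t + sum_list (map nverts ts') = 1 \<longleftrightarrow> nverts t = 1 \<and> ts' = []"
    using nverts_pos[of t] sum_list_nverts_eq_0_iff[of ts'] by linarith
  with Cons nverts_eq_1_iff[of t] show ?thesis by auto
qed simp

lemma nverts_eq_2_iff: "nverts t = 2 \<longleftrightarrow> (\<exists>c d. t = CNode c [CNode d []])"
  by (cases t) (auto simp: numeral_2_eq_2 sum_list_nverts_eq_1_iff[unfolded One_nat_def])

lemma valid_col_edge_iff: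
  "valid_col m A (CNode i [CNode j []]) \<longleftrightarrow> i \<in> {1..m} \<and> j \<in> {1..m} \<and> A i j = 1"
  by auto

lemma valid_two_vertex_trees:
  "{t. valid_col m A t \<and> nverts t = 2} =
     (\<lambda>(i, j). CNode i [CNode j []]) ` {(i, j). i \<in> {1..m} \<and> j \<in> {1..m} \<and> A i j = 1}"
  unfolding nverts_eq_2_iff by (force simp del: valid_col.simps simp: valid_col_edge_iff)

lemma valid_two_vertex_trees_with_root:
  "{t. valid_col m A t \<and> nverts t = 2 \<and> root_color t = i} =
     (\<lambda>j. CNode i [CNode j []]) ` {j. j \<in> {1..m} \<and> A i j = 1}"
  if "i \<in> {1..m}"
  unfolding nverts_eq_2_iff using that
  by (force simp del: valid_col.simps simp: valid_col_edge_iff)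

lemma tA_2_eq_num_ones: "tA m A 2 = num_ones m A"
  unfolding tA_def num_ones_def valid_two_vertex_trees
  by (rule card_image) (auto simp: inj_on_def)

lemma tAi_2_eq_row_ones: "tAi m A i 2 = row_ones m A i" if "i \<in> {1..m}"
  unfolding tAi_def row_ones_def valid_two_vertex_trees_with_root[OF that]
  by (rule card_image) (auto simp: inj_on_def)

theorem theorem10:
  fixes m :: nat and A B :: "nat \<Rightarrow> nat \<Rightarrow> nat"
  assumes "coloring_matrix m A" and "coloring_matrix m B"
  shows "(tree_coloring_equiv m A B \<longrightarrow> num_ones m A = num_ones m B) \<and>
         (strict_tree_coloring_equiv m A B \<longrightarrow>
            (\<forall>i\<in>{1..m}. row_ones m A i = row_ones m B i))"
proof safe
  assume "tree_coloring_equiv m A B"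
  then have "tA m A 2 = tA m B 2"
    unfolding tree_coloring_equiv_def by simp
  then show "num_ones m A = num_ones m B"
    by (simp add: tA_2_eq_num_ones)
next
  fix i assume "strict_tree_coloring_equiv m A B" and i: "i \<in> {1..m}"
  then have "tAi m A i 2 = tAi m B i 2"
    unfolding strict_tree_coloring_equiv_def by simp
  then show "row_ones m A i = row_ones m B i"
    using i by (simp add: tAi_2_eq_row_ones)
qed

end
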